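(* For $m\ge0$ let $\mathrm{Split}_m(t)=\sum_{n\ge0}w_{\mathfrak{sl}_2}((K_m,n))t^n$. Then $$\mathrm{Split}_m(t)=\frac{w_{\mathfrak{sl}_2}(K_m)+t\sum_{i=0}^{m-1}(-1)^{m-i}u_{i,m}(c)\,\mathrm{Split}_i(t)}{1-\big(c-\frac{m(m+1)}2\big)t}.$$
   Context: Let $c=x_1^2+x_2^2+x_3^2$ be the Casimir of $U(\mathfrak{sl}_2)$ for $x_1=\tfrac12\begin{pmatrix}0&1\\1&0\end{pmatrix}$, $x_2=\tfrac12\begin{pmatrix}0&-i\\ i&0\end{pmatrix}$, $x_3=\tfrac12\begin{pmatrix}1&0\\0&-1\end{pmatrix}$. For a chord diagram $D$, $w_{\mathfrak{sl}_2}(D)=\sum_\varphi x_{\varphi(p_1)}\cdots x_{\varphi(p_{2n})}\in\mathbb C[c]$ ($p_i$ the endpoints in order from a cut point, $\varphi$ over maps chords$\to\{1,2,3\}$); it depends only on the intersection graph and hence is defined on intersection graphs. $K_m$ is the complete graph on $m$ vertices, and $(K_m,n)$ is the join of $K_m$ with the edgeless graph on $n$ vertices (a complete split graph, an intersection graph). The polynomials $u_{i,m}(c)$ are defined by $\sum_{m\ge0}\sum_{i=0}^m u_{i,m}(c)y^it^m=\frac1{1-yt}\Big(c+\frac{c^2t^2-yt}{1-(2y-1)t-(2c-y^2-y)t^2}\Big)$. *)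

theory Defs
  imports Complex_Main "HOL-Computational_Algebra.Polynomial" "HOL-Computational_Algebra.Formal_Power_Series" "HOL-Library.FuncSet"
begin

text \<open>Free associative algebra on generators x_1,x_2,x_3 over the complex numbers:
  an element is a function from words (lists of generator indices) to coefficients.
  Elements of the polynomial free algebra are those with finite support.\<close>

type_synonym fa = "nat list \<Rightarrow> complex"

definition fa_fin :: "fa \<Rightarrow> bool" where
  "fa_fin a \<longleftrightarrow> finite {w. a w \<noteq> 0}"

definition fa_add :: "fa \<Rightarrow> fa \<Rightarrow> fa" where
  "fa_add a b = (\<lambda>w. a w + b w)"

definition fa_sub :: "fa \<Rightarrow> fa \<Rightarrow> fa" where
  "fa_sub a b = (\<lambda>w. a w - b w)"

definition fa_scal :: "complex \<Rightarrow> fa \<Rightarrow> fa" where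
  "fa_scal z a = (\<lambda>w. z * a w)"

definition fa_mult :: "fa \<Rightarrow> fa \<Rightarrow> fa" where
  "fa_mult a b = (\<lambda>w. \<Sum>k\<le>length w. a (take k w) * b (drop k w))"

definition fa_mono :: "nat list \<Rightarrow> fa" where
  "fa_mono u = (\<lambda>w. if w = u then 1 else 0)"

definition fa_one :: fa where
  "fa_one = fa_mono []"

definition fa_gen :: "nat \<Rightarrow> fa" where
  "fa_gen j = fa_mono [j]"

primrec fa_pow :: "fa \<Rightarrow> nat \<Rightarrow> fa" where
  "fa_pow a 0 = fa_one"
| "fa_pow a (Suc k) = fa_mult a (fa_pow a k)"

text \<open>Commutation relations of sl_2 in the basis x_1,x_2,x_3 (x_j = sigma_j / 2):
  [x_1,x_2] = i x_3, [x_2,x_3] = i x_1, [x_3,x_1] = i x_2.\<close>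

definition sl2_triples :: "(nat \<times> nat \<times> nat) set" where
  "sl2_triples = {(1,2,3), (2,3,1), (3,1,2)}"

definition sl2_rel :: "nat \<Rightarrow> nat \<Rightarrow> nat \<Rightarrow> fa" where
  "sl2_rel p q r = fa_sub (fa_sub (fa_mult (fa_gen p) (fa_gen q)) (fa_mult (fa_gen q) (fa_gen p)))
                          (fa_scal \<i> (fa_gen r))"

text \<open>Two-sided ideal of the free algebra generated by the relations; U(sl_2) is the quotient.\<close>

inductive_set sl2_ideal :: "fa set" where
  zero: "(\<lambda>_. 0) \<in> sl2_ideal"
| gen: "fa_fin a \<Longrightarrow> fa_fin b \<Longrightarrow> (p, q, r) \<in> sl2_triples \<Longrightarrow>
          fa_mult (fa_mult a (sl2_rel p q r)) b \<in> sl2_ideal"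
| add: "x \<in> sl2_ideal \<Longrightarrow> y \<in> sl2_ideal \<Longrightarrow> fa_add x y \<in> sl2_ideal"

definition U_eq :: "fa \<Rightarrow> fa \<Rightarrow> bool" where
  "U_eq a b \<longleftrightarrow> fa_sub a b \<in> sl2_ideal"

definition casimir :: fa where
  "casimir = fa_add (fa_add (fa_mult (fa_gen 1) (fa_gen 1)) (fa_mult (fa_gen 2) (fa_gen 2)))
                    (fa_mult (fa_gen 3) (fa_gen 3))"

definition eval_c :: "complex poly \<Rightarrow> fa" where
  "eval_c p = (\<lambda>w. \<Sum>k\<le>degree p. coeff p k * fa_pow casimir k w)"

text \<open>Chord diagrams are given by words: the sequence of chord labels read along the
  line from the cut point, each label occurring exactly twice.
  w_sl2(D) = sum over phi : chords -> {1,2,3} of x_{phi(p_1)} ... x_{phi(p_2n)}.\<close>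

definition w_sl2 :: "nat list \<Rightarrow> fa" where
  "w_sl2 d = (\<lambda>v. \<Sum>\<phi>\<in>PiE (set d) (\<lambda>_. {1,2,3::nat}). if map \<phi> d = v then 1 else 0)"

text \<open>A chord diagram whose intersection graph is the complete split graph (K_m, n):
  chords 0..m-1 pairwise crossing; chords m..m+n-1 crossing every chord of K_m and
  none of each other.\<close>

definition split_diag :: "nat \<Rightarrow> nat \<Rightarrow> nat list" where
  "split_diag m n = [0..<m] @ map ((+) m) [0..<n] @ [0..<m] @ rev (map ((+) m) [0..<n])"

definition complete_diag :: "nat \<Rightarrow> nat list" where
  "complete_diag m = [0..<m] @ [0..<m]"

text \<open>The polynomials u_{i,m}(c): the generating function lives in C[c][y][[t]]
  (type complex poly poly fps: y = outer polynomial variable, c = inner one).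
  Since the denominator (1-yt)(1-(2y-1)t-(2c-y^2-y)t^2) has constant term 1, the series
  is the unique F with  denominator * F = numerator.\<close>

definition pc :: "complex poly poly" where "pc = [:[:0, 1:]:]"
definition py :: "complex poly poly" where "py = [:0, 1:]"

definition u_den :: "complex poly poly fps" where
  "u_den = 1 - fps_const (2 * py - 1) * fps_X - fps_const (2 * pc - py^2 - py) * fps_X ^ 2"

definition u_series :: "complex poly poly fps" where
  "u_series = (THE F. (1 - fps_const py * fps_X) * u_den * F
                 = fps_const pc * u_den + fps_const (pc^2) * fps_X ^ 2 - fps_const py * fps_X)"

definition u_poly :: "nat \<Rightarrow> nat \<Rightarrow> complex poly" where
  "u_poly i m = coeff (fps_nth u_series m) i"

end

theory Submission
  imports Defs "HOL-Library.Poly_Mapping" "HOL-Library.Product_Plus"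
begin

text \<open>
  Let \<Omega> = x_1 \<otimes> x_1 + x_2 \<otimes> x_2 + x_3 \<otimes> x_3 be the split Casimir element and
  wrap v = \<Sum>_a x_a v x_a. Summing over the colourings of the chords shows that w(K_m, n) is the
  image of \<Omega>^m under the contraction u \<otimes> v \<mapsto> u wrap^n(v), and that one more chord in the
  edgeless part replaces \<Omega>^m by \<Sum>_a (1 \<otimes> x_a) \<Omega>^m (1 \<otimes> x_a).

  Modulo the largest ideal that every contraction sends into the relations of U(sl_2), the tensor
  square becomes a ring in which W_a = -i x_a \<otimes> 1 and Y_a = 1 \<otimes> -i x_a form two commuting
  copies of su(2) with the same Casimir K; the Casimir can be moved across a contraction because it
  is central and commutes with wrap. For T = -\<Omega> and Z = W \<times> Y one has
  Y_a T = T Y_a + Z_a, (W_a - Y_a) T = T (W_a - Y_a) - 2 Z_a and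
  Z_a T = (T + K) (W_a - Y_a) + (T - 1) Z_a, hence
  \<Sum>_a Y_a T^m Y_a = T^m K + \<alpha>_m (T - K) + \<beta>_m T with \<alpha>_m, \<beta>_m given by a linear recursion in
  T and K. With T = y and K = -c, the polynomials c y^m - \<alpha>_m (y + c) - \<beta>_m y have exactly the
  generating function that defines u_{i,m}, and contracting the identity yields the recursion.
\<close>

section \<open>Monoid algebras and their tensor squares\<close>

lemma poly_mapping_single_induct [case_names zero single add]:
  fixes f :: "'a \<Rightarrow>\<^sub>0 'b::monoid_add"
  assumes "P 0" and "\<And>k a. P (Poly_Mapping.single k a)"
    and "\<And>f g. P f \<Longrightarrow> P g \<Longrightarrow> P (f + g)"
  shows "P f"
proof (induction f rule: update_induct)
  case (update f k a)
  have "Poly_Mapping.update k a f = f + Poly_Mapping.single k a"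
    using update(1)
    by (intro poly_mapping_eqI) (auto simp: lookup_update lookup_add lookup_single when_def in_keys_iff)
  with update(3) assms(2,3) show ?case by simp
qed (fact assms(1))

definition scalar :: "'c \<Rightarrow> 'k::monoid_add \<Rightarrow>\<^sub>0 'c::comm_ring_1" where
  "scalar z = Poly_Mapping.single 0 z"

lemma scalar_mult_single: "scalar z * Poly_Mapping.single k a = Poly_Mapping.single k (z * a)"
  by (simp add: scalar_def mult_single)

lemma single_eq_scalar_mult: "Poly_Mapping.single k z = scalar z * Poly_Mapping.single k 1"
  by (simp add: scalar_mult_single)

lemma scalar_commute: "scalar z * p = p * scalar z"
proof (induction p rule: poly_mapping_single_induct)
  case (single k a)
  show ?case by (simp add: scalar_def mult_single mult.commute)
qed (simp_all add: distrib_left distrib_right)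

lemma mult_scalar_left_commute: "p * (scalar z * q) = scalar z * (p * q)"
  by (metis mult.assoc scalar_commute)

lemma scalar_0 [simp]: "scalar 0 = 0" and scalar_1 [simp]: "scalar 1 = 1"
  by (simp_all add: scalar_def)

lemma scalar_add: "scalar (a + b) = scalar a + scalar b"
  and scalar_minus: "scalar (- a) = - scalar a"
  and scalar_mult: "scalar (a * b) = scalar a * scalar b"
  by (simp_all add: scalar_def single_add single_uminus mult_single)

lemma scalar_power: "scalar (a ^ n) = scalar a ^ n"
  by (induction n) (simp_all add: scalar_mult)

lemma lookup_scalar_mult: "Poly_Mapping.lookup (scalar z * p) k = z * Poly_Mapping.lookup p k"
proof (induction p rule: poly_mapping_single_induct)
  case (single k' a)
  show ?case by (simp add: scalar_mult_single lookup_single when_def)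
qed (simp_all add: distrib_left lookup_add)

definition tensor_fst :: "('a \<Rightarrow>\<^sub>0 'c) \<Rightarrow> ('a \<times> 'b::zero \<Rightarrow>\<^sub>0 'c::zero)" where
  "tensor_fst p = Abs_poly_mapping (\<lambda>(u, v). if v = 0 then Poly_Mapping.lookup p u else 0)"

definition tensor_snd :: "('b \<Rightarrow>\<^sub>0 'c) \<Rightarrow> ('a::zero \<times> 'b \<Rightarrow>\<^sub>0 'c::zero)" where
  "tensor_snd q = Abs_poly_mapping (\<lambda>(u, v). if u = 0 then Poly_Mapping.lookup q v else 0)"

lemma lookup_tensor_fst:
  "Poly_Mapping.lookup (tensor_fst p) = (\<lambda>(u, v). if v = 0 then Poly_Mapping.lookup p u else 0)"
  unfolding tensor_fst_def
  by (rule lookup_Abs_poly_mapping, rule finite_subset[of _ "(\<lambda>u. (u, 0)) ` Poly_Mapping.keys p"])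
    (auto simp: in_keys_iff split: if_splits)

lemma lookup_tensor_snd:
  "Poly_Mapping.lookup (tensor_snd q) = (\<lambda>(u, v). if u = 0 then Poly_Mapping.lookup q v else 0)"
  unfolding tensor_snd_def
  by (rule lookup_Abs_poly_mapping, rule finite_subset[of _ "(\<lambda>v. (0, v)) ` Poly_Mapping.keys q"])
    (auto simp: in_keys_iff split: if_splits)

interpretation tensor_fst: additive tensor_fst
  by unfold_locales (rule poly_mapping_eqI, simp add: lookup_tensor_fst lookup_add split: prod.split)

declare tensor_fst.zero [simp]

interpretation tensor_snd: additive tensor_snd
  by unfold_locales (rule poly_mapping_eqI, simp add: lookup_tensor_snd lookup_add split: prod.split)

declare tensor_snd.zero [simp]

lemma tensor_fst_single: "tensor_fst (Poly_Mapping.single u a) = Poly_Mapping.single (u, 0) a"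
  by (rule poly_mapping_eqI) (auto simp: lookup_tensor_fst lookup_single when_def split: if_splits)

lemma tensor_snd_single: "tensor_snd (Poly_Mapping.single v a) = Poly_Mapping.single (0, v) a"
  by (rule poly_mapping_eqI) (auto simp: lookup_tensor_snd lookup_single when_def split: if_splits)

lemma tensor_fst_mult:
  fixes p q :: "'k::monoid_add \<Rightarrow>\<^sub>0 'c::comm_ring_1"
  shows "tensor_fst (p * q) = (tensor_fst p * tensor_fst q :: 'k \<times> 'l::monoid_add \<Rightarrow>\<^sub>0 'c)"
proof (induction p rule: poly_mapping_single_induct)
  case (single k a)
  show ?case
  proof (induction q rule: poly_mapping_single_induct)
    case (single k' b) show ?case by (simp add: tensor_fst_single mult_single)
  qed (simp_all add: distrib_left tensor_fst.add)
qed (simp_all add: distrib_right tensor_fst.add)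

lemma tensor_snd_mult:
  fixes p q :: "'l::monoid_add \<Rightarrow>\<^sub>0 'c::comm_ring_1"
  shows "tensor_snd (p * q) = (tensor_snd p * tensor_snd q :: 'k::monoid_add \<times> 'l \<Rightarrow>\<^sub>0 'c)"
proof (induction p rule: poly_mapping_single_induct)
  case (single k a)
  show ?case
  proof (induction q rule: poly_mapping_single_induct)
    case (single k' b) show ?case by (simp add: tensor_snd_single mult_single)
  qed (simp_all add: distrib_left tensor_snd.add)
qed (simp_all add: distrib_right tensor_snd.add)

lemma tensor_fst_scalar: "tensor_fst (scalar z) = scalar z"
  and tensor_snd_scalar: "tensor_snd (scalar z) = scalar z"
  by (simp_all add: scalar_def tensor_fst_single tensor_snd_single zero_prod_def)

lemma tensor_fst_1 [simp]: "tensor_fst 1 = (1 :: 'k::monoid_add \<times> 'l::monoid_add \<Rightarrow>\<^sub>0 'c::comm_ring_1)"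
  by (metis scalar_1 tensor_fst_scalar)

lemma tensor_snd_1 [simp]: "tensor_snd 1 = (1 :: 'k::monoid_add \<times> 'l::monoid_add \<Rightarrow>\<^sub>0 'c::comm_ring_1)"
  by (metis scalar_1 tensor_snd_scalar)

lemma tensor_fst_snd_commute:
  fixes p :: "'k::monoid_add \<Rightarrow>\<^sub>0 'c::comm_ring_1" and q :: "'l::monoid_add \<Rightarrow>\<^sub>0 'c"
  shows "tensor_fst p * tensor_snd q = tensor_snd q * tensor_fst p"
proof (induction p rule: poly_mapping_single_induct)
  case (single k a)
  show ?case
  proof (induction q rule: poly_mapping_single_induct)
    case (single k' b)
    show ?case by (simp add: tensor_fst_single tensor_snd_single mult_single mult.commute)
  qed (simp_all add: distrib_left distrib_right tensor_snd.add)
qed (simp_all add: distrib_left distrib_right tensor_fst.add)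

lemma single_pair_eq_tensor:
  "Poly_Mapping.single (u, v) (a :: 'c::comm_ring_1)
     = tensor_fst (Poly_Mapping.single u a) * tensor_snd (Poly_Mapping.single v 1)"
  by (simp add: tensor_fst_single tensor_snd_single mult_single)

lemma tensor_mult_tensor:
  fixes a c :: "'k::monoid_add \<Rightarrow>\<^sub>0 'c::comm_ring_1" and b d :: "'l::monoid_add \<Rightarrow>\<^sub>0 'c"
  shows "tensor_fst a * tensor_snd b * (tensor_fst c * tensor_snd d) = tensor_fst (a * c) * tensor_snd (b * d)"
proof -
  have "tensor_fst a * tensor_snd b * (tensor_fst c * tensor_snd d)
      = tensor_fst a * (tensor_snd b * tensor_fst c) * tensor_snd d"
    by (simp only: mult.assoc)
  also have "tensor_snd b * tensor_fst c = tensor_fst c * tensor_snd b"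
    by (rule tensor_fst_snd_commute[symmetric])
  also have "tensor_fst a * (tensor_fst c * tensor_snd b) * tensor_snd d
      = tensor_fst (a * c) * tensor_snd (b * d)"
    by (simp only: tensor_fst_mult tensor_snd_mult mult.assoc)
  finally show ?thesis .
qed

section \<open>Two commuting copies of su(2)\<close>

fun alpha_beta :: "'a::ring_1 \<Rightarrow> 'a \<Rightarrow> nat \<Rightarrow> 'a \<times> 'a" where
  "alpha_beta t k 0 = (0, 0)"
| "alpha_beta t k (Suc m) = (let (a, b) = alpha_beta t k m in
     (a * t + b * (t + k), t ^ m - a - a + b * (t - 1)))"

lemma mult_power_eq_alpha_beta:
  fixes y d z t k :: "'a::ring_1"
  assumes "y * t = t * y + z" and "d * t = t * d - z - z" and "z * t = (t + k) * d + (t - 1) * z"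
  shows "y * t ^ m = t ^ m * y + fst (alpha_beta t k m) * d + snd (alpha_beta t k m) * z"
proof (induction m)
  case (Suc m)
  obtain a b where ab: "alpha_beta t k m = (a, b)" by fastforce
  have "y * t ^ Suc m = (t ^ m * y + a * d + b * z) * t"
    using Suc by (simp only: ab power_Suc2 mult.assoc[symmetric] fst_conv snd_conv)
  also have "\<dots> = t ^ m * (y * t) + a * (d * t) + b * (z * t)"
    by (simp add: distrib_right mult.assoc)
  also have "\<dots> = t ^ Suc m * y + (a * t + b * (t + k)) * d + (t ^ m - a - a + b * (t - 1)) * z"
    unfolding assms by (simp add: algebra_simps power_Suc2 del: power_Suc)
  finally show ?case by (simp add: ab)
qed simp

lemma map_alpha_beta:
  fixes g :: "'a::ring_1 \<Rightarrow> 'b::ring_1"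
  assumes "additive g" and "\<And>x. g (x * t) = g x * t'" and "\<And>x. g (x * k) = g x * k'"
    and "\<And>m. g (t ^ m) = t' ^ m"
  shows "g (fst (alpha_beta t k m)) = fst (alpha_beta t' k' m)
    \<and> g (snd (alpha_beta t k m)) = snd (alpha_beta t' k' m)"
proof (induction m)
  case (Suc m)
  then show ?case
    by (simp add: Let_def split_def distrib_left right_diff_distrib assms(2-4)
        additive.add[OF assms(1)] additive.diff[OF assms(1)])
qed (simp add: additive.zero[OF assms(1)])

lemma sl2_triples_members: "(1, 2, 3) \<in> sl2_triples" "(2, 3, 1) \<in> sl2_triples" "(3, 1, 2) \<in> sl2_triples"
  by (simp_all add: sl2_triples_def)

lemma central_sandwich:
  fixes c :: "'a::ring_1"
  assumes "\<And>x. c * x = x * c"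
  shows "(c * y) * z * (c * y) = (c * c) * (y * z * y)"
  by (metis assms mult.assoc)

text \<open>Realised below by the images of -i x_a in the two factors of the tensor square.\<close>

locale su2_pair =
  fixes W Y :: "nat \<Rightarrow> 'a::ring_1"
  assumes W_bracket: "(p, q, r) \<in> sl2_triples \<Longrightarrow> W p * W q - W q * W p = W r"
    and Y_bracket: "(p, q, r) \<in> sl2_triples \<Longrightarrow> Y p * Y q - Y q * Y p = Y r"
    and Y_W_commute: "Y b * W a = W a * Y b"
    and casimirs_eq: "W 1 * W 1 + W 2 * W 2 + W 3 * W 3 = Y 1 * Y 1 + Y 2 * Y 2 + Y 3 * Y 3"
begin

declare One_nat_def [simp del]
  \<comment> \<open>otherwise the index 1 is rewritten to Suc 0 and no longer matches the relations\<close>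

definition K :: 'a where "K = W 1 * W 1 + W 2 * W 2 + W 3 * W 3"
definition T :: 'a where "T = W 1 * Y 1 + W 2 * Y 2 + W 3 * Y 3"

definition cross :: "nat \<Rightarrow> nat \<Rightarrow> 'a" where "cross q r = W q * Y r - W r * Y q"

lemma normalize_brackets:
  "W 2 * W 1 = W 1 * W 2 - W 3" "W 3 * W 1 = W 1 * W 3 + W 2" "W 3 * W 2 = W 2 * W 3 - W 1"
  "Y 2 * Y 1 = Y 1 * Y 2 - Y 3" "Y 3 * Y 1 = Y 1 * Y 3 + Y 2" "Y 3 * Y 2 = Y 2 * Y 3 - Y 1"
  using W_bracket[of 1 2 3] W_bracket[of 2 3 1] W_bracket[of 3 1 2]
    Y_bracket[of 1 2 3] Y_bracket[of 2 3 1] Y_bracket[of 3 1 2]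
  by (auto simp: sl2_triples_def algebra_simps)

lemma normalize_brackets_assoc:
  "W 2 * (W 1 * x) = W 1 * (W 2 * x) - W 3 * x" "W 3 * (W 1 * x) = W 1 * (W 3 * x) + W 2 * x"
  "W 3 * (W 2 * x) = W 2 * (W 3 * x) - W 1 * x" "Y 2 * (Y 1 * x) = Y 1 * (Y 2 * x) - Y 3 * x"
  "Y 3 * (Y 1 * x) = Y 1 * (Y 3 * x) + Y 2 * x" "Y 3 * (Y 2 * x) = Y 2 * (Y 3 * x) - Y 1 * x"
  "Y b * (W a * x) = W a * (Y b * x)"
  by (simp_all add: mult.assoc[symmetric] normalize_brackets Y_W_commute left_diff_distrib distrib_right)

lemmas normalize = normalize_brackets normalize_brackets_assoc Y_W_commute

lemma K_eq: "K = Y 1 * Y 1 + Y 2 * Y 2 + Y 3 * Y 3"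
  by (simp add: K_def casimirs_eq)

lemma T_relations:
  assumes "(p, q, r) \<in> sl2_triples"
  shows "Y p * T = T * Y p + cross q r"
    and "(W p - Y p) * T = T * (W p - Y p) - cross q r - cross q r"
    and "cross q r * T = (T + K) * (W p - Y p) + (T - 1) * cross q r"
proof -
  show "Y p * T = T * Y p + cross q r" "(W p - Y p) * T = T * (W p - Y p) - cross q r - cross q r"
    using assms by (auto simp: sl2_triples_def T_def cross_def algebra_simps normalize)
  \<comment> \<open>K is written as the Casimir of the other copy, which commutes with W p resp. Y p\<close>
  have "cross q r * T = (T + (Y 1 * Y 1 + Y 2 * Y 2 + Y 3 * Y 3)) * W p
      - (T + (W 1 * W 1 + W 2 * W 2 + W 3 * W 3)) * Y p + (T - 1) * cross q r"
    using assms by (auto simp: sl2_triples_def T_def cross_def algebra_simps normalize)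
  moreover have "(T + K) * W p = (T + (Y 1 * Y 1 + Y 2 * Y 2 + Y 3 * Y 3)) * W p"
    "(T + K) * Y p = (T + (W 1 * W 1 + W 2 * W 2 + W 3 * W 3)) * Y p"
    by (simp_all only: flip: K_eq K_def)
  ultimately show "cross q r * T = (T + K) * (W p - Y p) + (T - 1) * cross q r"
    by (simp only: right_diff_distrib)
qed

definition alpha :: "nat \<Rightarrow> 'a" where "alpha m = fst (alpha_beta T K m)"
definition beta :: "nat \<Rightarrow> 'a" where "beta m = snd (alpha_beta T K m)"

lemma Y_mult_T_power:
  assumes "(p, q, r) \<in> sl2_triples"
  shows "Y p * T ^ m = T ^ m * Y p + alpha m * (W p - Y p) + beta m * cross q r"
  unfolding alpha_def beta_def by (rule mult_power_eq_alpha_beta[OF T_relations[OF assms]])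

lemma sum_Y_T_power_Y:
  "Y 1 * T ^ m * Y 1 + Y 2 * T ^ m * Y 2 + Y 3 * T ^ m * Y 3
     = T ^ m * K + alpha m * (T - K) + beta m * T"
proof -
  have "Y 1 * T ^ m * Y 1 + Y 2 * T ^ m * Y 2 + Y 3 * T ^ m * Y 3
     = T ^ m * (Y 1 * Y 1 + Y 2 * Y 2 + Y 3 * Y 3)
       + alpha m * ((W 1 * Y 1 + W 2 * Y 2 + W 3 * Y 3) - (Y 1 * Y 1 + Y 2 * Y 2 + Y 3 * Y 3))
       + beta m * (cross 2 3 * Y 1 + cross 3 1 * Y 2 + cross 1 2 * Y 3)"
    unfolding Y_mult_T_power[OF sl2_triples_members(1)] Y_mult_T_power[OF sl2_triples_members(2)]
      Y_mult_T_power[OF sl2_triples_members(3)]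
    by (simp add: algebra_simps)
  also have "cross 2 3 * Y 1 + cross 3 1 * Y 2 + cross 1 2 * Y 3 = T"
    by (simp add: cross_def T_def algebra_simps normalize)
  finally show ?thesis by (simp add: T_def K_eq)
qed

lemma K_commute_T: "K * T = T * K"
  by (simp add: K_def T_def algebra_simps normalize)

end

definition peval :: "('c::zero \<Rightarrow> 'a::ring_1) \<Rightarrow> 'a \<Rightarrow> 'c poly \<Rightarrow> 'a" where
  "peval f t p = (\<Sum>i\<le>degree p. f (coeff p i) * t ^ i)"

context
  fixes f :: "'c::comm_ring_1 \<Rightarrow> 'a::ring_1"
  assumes f_additive: "additive f"
begin

interpretation additive f by (fact f_additive)

lemma peval_bound:
  "degree p \<le> N \<Longrightarrow> peval f t p = (\<Sum>i\<le>N. f (coeff p i) * t ^ i)"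
  unfolding peval_def by (rule sum.mono_neutral_left) (auto simp: coeff_eq_0 zero)

lemma peval_add: "peval f t (p + q) = peval f t p + peval f t q"
proof -
  let ?N = "max (degree p) (degree q)"
  have "degree (p + q) \<le> ?N" by (rule degree_add_le) auto
  then show ?thesis
    by (simp add: peval_bound[of _ ?N] add distrib_right sum.distrib)
qed

lemma additive_peval: "additive (peval f t)"
  by unfold_locales (rule peval_add)

lemma peval_pCons_0: "peval f t (pCons 0 p) = peval f t p * t"
proof -
  have "peval f t (pCons 0 p) = (\<Sum>i\<le>Suc (degree p). f (coeff (pCons 0 p) i) * t ^ i)"
    by (rule peval_bound) (rule degree_pCons_le)
  also have "\<dots> = (\<Sum>i\<le>degree p. f (coeff p i) * t ^ Suc i)"
    by (subst sum.atMost_Suc_shift) (simp add: zero del: power_Suc)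
  also have "\<dots> = peval f t p * t"
    by (simp add: peval_def sum_distrib_right mult.assoc power_Suc2 del: power_Suc)
  finally show ?thesis .
qed

lemma peval_smult:
  assumes "\<And>c. f (q * c) = f c * z" and "z * t = t * z"
  shows "peval f t (smult q p) = peval f t p * z"
proof -
  have "z * t ^ i = t ^ i * z" for i
    by (induction i) (simp_all add: assms(2) mult.assoc flip: mult.assoc[of z])
  then have "peval f t (smult q p) = (\<Sum>i\<le>degree p. f (coeff p i) * t ^ i * z)"
    by (simp add: peval_bound[OF degree_smult_le] assms(1) mult.assoc)
  then show ?thesis by (simp add: peval_def sum_distrib_right)
qed

lemma peval_monom: "peval f t (monom c n) = f c * t ^ n"
proof -
  have "peval f t (monom c n) = (\<Sum>i\<le>n. if i = n then f c * t ^ n else 0)"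
    by (rule trans[OF peval_bound[OF degree_monom_le]], rule sum.cong) (auto simp: zero)
  then show ?thesis by simp
qed

end

lemma peval_hom:
  assumes "additive h" and "\<And>x y. h (x * y) = h x * h y" and "h 1 = 1"
  shows "h (peval f t p) = peval (h \<circ> f) (h t) p"
proof -
  have "h (t ^ i) = h t ^ i" for i by (induction i) (simp_all add: assms(2,3))
  then show ?thesis by (simp add: peval_def additive.sum[OF assms(1)] assms(2))
qed

context
  fixes s :: "complex \<Rightarrow> 'a::ring_1" and C T :: 'a
  assumes s_additive: "additive s" and s_one: "s 1 = 1" and C_commute_T: "C * T = T * C"
begin

lemma peval2_mult_py: "peval (peval s C) T (p * py) = peval (peval s C) T p * T"
proof -
  have "p * py = pCons 0 p" by (simp add: py_def)
  then show ?thesis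
    by (simp add: peval_pCons_0 additive_peval s_additive)
qed

lemma peval2_mult_pc: "peval (peval s C) T (p * pc) = peval (peval s C) T p * C"
proof -
  have "p * pc = smult [:0, 1:] p" by (simp add: pc_def)
  moreover have "peval s C ([:0, 1:] * c) = peval s C c * C" for c
    using peval_pCons_0[OF s_additive, of C c] by simp
  ultimately show ?thesis
    by (simp add: peval_smult additive_peval s_additive C_commute_T)
qed

lemma peval2_py_power: "peval (peval s C) T (py ^ m) = T ^ m"
proof -
  have "py ^ m = monom 1 m" by (simp add: py_def monom_altdef)
  moreover have "peval s C 1 = 1"
    using peval_monom[OF s_additive, of C 1 0] by (simp add: s_one)
  ultimately show ?thesis
    by (simp add: peval_monom additive_peval s_additive)
qed

end

section \<open>The polynomials u_{i,m}\<close>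

text \<open>The coefficients of \<open>su2_pair.sum_Y_T_power_Y\<close> as polynomials in y = T and c = -K;
  \<open>u_coeff m\<close> corresponds to -(\<Sum>_a Y_a T^m Y_a).\<close>

definition alpha_poly :: "nat \<Rightarrow> complex poly poly" where
  "alpha_poly m = fst (alpha_beta py (- pc) m)"

definition beta_poly :: "nat \<Rightarrow> complex poly poly" where
  "beta_poly m = snd (alpha_beta py (- pc) m)"

lemma alpha_beta_poly_0: "alpha_poly 0 = 0" "beta_poly 0 = 0"
  by (simp_all add: alpha_poly_def beta_poly_def)

lemma alpha_beta_poly_Suc:
  "alpha_poly (Suc m) = alpha_poly m * py + beta_poly m * (py - pc)"
  "beta_poly (Suc m) = py ^ m - alpha_poly m - alpha_poly m + beta_poly m * (py - 1)"
  by (simp_all add: alpha_poly_def beta_poly_def Let_def split_def)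

definition u_coeff :: "nat \<Rightarrow> complex poly poly" where
  "u_coeff m = py ^ m * pc - alpha_poly m * py - alpha_poly m * pc - beta_poly m * py"

lemma u_coeff_recurrence:
  "u_coeff (Suc (Suc (Suc m))) = (3 * py - 1) * u_coeff (Suc (Suc m))
     - (3 * py ^ 2 - 2 * pc) * u_coeff (Suc m) - py * (2 * pc - py ^ 2 - py) * u_coeff m"
  unfolding u_coeff_def alpha_beta_poly_Suc power_Suc by algebra

lemma u_den_mult:
  "u_den * f = f - fps_const (2 * py - 1) * (fps_X * f)
     - fps_const (2 * pc - py ^ 2 - py) * (fps_X * (fps_X * f))"
  unfolding u_den_def by (simp add: algebra_simps power2_eq_square)

lemma u_series_equation:
  "(1 - fps_const py * fps_X) * u_den * Abs_fps u_coeff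
     = fps_const pc * u_den + fps_const (pc ^ 2) * fps_X ^ 2 - fps_const py * fps_X"
proof (rule fps_ext)
  fix n
  have lhs: "(1 - fps_const py * fps_X) * u_den * f
      = u_den * f - fps_const py * (fps_X * (u_den * f))" for f
    by (simp add: algebra_simps)
  consider "n = 0" | "n = 1" | "n = 2" | m where "n = Suc (Suc (Suc m))"
    by (metis One_nat_def Suc_1 not0_implies_Suc)
  then show "fps_nth ((1 - fps_const py * fps_X) * u_den * Abs_fps u_coeff) n
      = fps_nth (fps_const pc * u_den + fps_const (pc ^ 2) * fps_X ^ 2 - fps_const py * fps_X) n"
  proof cases
    case 4
    then show ?thesis
      by (simp add: lhs u_den_mult u_den_def u_coeff_recurrence fps_X_power_nth numeral_2_eq_2
          algebra_simps power2_eq_square)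
  qed (simp_all add: lhs u_den_mult u_den_def u_coeff_def alpha_beta_poly_0 alpha_beta_poly_Suc
      fps_X_power_nth numeral_2_eq_2 algebra_simps)
qed

lemma u_series_eq: "u_series = Abs_fps u_coeff"
proof -
  have "fps_nth ((1 - fps_const py * fps_X) * u_den) 0 = 1"
    by (simp add: u_den_def)
  then have nz: "(1 - fps_const py * fps_X) * u_den \<noteq> 0"
    by (metis fps_zero_nth zero_neq_one)
  show ?thesis
    unfolding u_series_def
  proof (rule the1_equality[OF ex1I])
    fix F
    assume "(1 - fps_const py * fps_X) * u_den * F
      = fps_const pc * u_den + fps_const (pc ^ 2) * fps_X ^ 2 - fps_const py * fps_X"
    with u_series_equation nz show "F = Abs_fps u_coeff"
      by (metis mult_left_cancel)
  qed (rule u_series_equation)+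
qed

lemma u_poly_eq_coeff: "u_poly i m = coeff (u_coeff m) i"
  by (simp add: u_poly_def u_series_eq)

lemma coeff_mult_py: "coeff (p * py) i = (case i of 0 \<Rightarrow> 0 | Suc j \<Rightarrow> coeff p j)"
  by (simp add: py_def coeff_pCons)

lemma coeff_mult_pc: "coeff (p * pc) i = [:0, 1:] * coeff p i"
  by (simp add: pc_def)

lemma coeff_py_power: "coeff (py ^ m) i = (if i = m then 1 else 0)"
  by (induction m arbitrary: i) (simp_all add: power_Suc2 coeff_mult_py split: nat.split del: power_Suc)

lemma coeff_alpha_beta_poly_Suc:
  "coeff (alpha_poly (Suc m)) i
     = (case i of 0 \<Rightarrow> 0 | Suc j \<Rightarrow> coeff (alpha_poly m) j + coeff (beta_poly m) j)
       - [:0, 1:] * coeff (beta_poly m) i"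
  "coeff (beta_poly (Suc m)) i
     = (if i = m then 1 else 0) - coeff (alpha_poly m) i - coeff (alpha_poly m) i
       + (case i of 0 \<Rightarrow> 0 | Suc j \<Rightarrow> coeff (beta_poly m) j) - coeff (beta_poly m) i"
  by (simp_all only: alpha_beta_poly_Suc right_diff_distrib distrib_left coeff_add coeff_diff
      coeff_mult_py coeff_mult_pc coeff_py_power mult_1_right split: nat.split) auto

lemma alpha_beta_poly_coeff_high:
  "m \<le> i \<Longrightarrow> coeff (alpha_poly m) i = 0 \<and> coeff (beta_poly m) i = 0"
proof (induction m arbitrary: i)
  case (Suc m)
  then obtain j where "i = Suc j" "m \<le> j" by (cases i) auto
  with Suc.IH[of j] Suc.IH[of i] show ?case
    by (simp add: coeff_alpha_beta_poly_Suc)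
qed (simp add: alpha_beta_poly_0)

lemma alpha_beta_poly_coeff_top:
  "coeff (alpha_poly (Suc m)) m = [:of_nat (m * (m + 1)) / 2:]
   \<and> coeff (beta_poly (Suc m)) m = [:of_nat (Suc m):]"
proof (induction m)
  case (Suc m)
  have "coeff (alpha_poly (Suc m)) (Suc m) = 0" "coeff (beta_poly (Suc m)) (Suc m) = 0"
    using alpha_beta_poly_coeff_high by auto
  moreover have "of_nat (m * (m + 1)) / 2 + of_nat (Suc m)
      = (of_nat (Suc m * (Suc m + 1)) / 2 :: complex)"
    by (simp add: field_simps)
  ultimately show ?case
    using Suc.IH by (simp add: coeff_alpha_beta_poly_Suc one_pCons)
qed (simp add: alpha_beta_poly_0 coeff_alpha_beta_poly_Suc)

lemma coeff_u_coeff: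
  "coeff (u_coeff m) i = (if i = m then [:0, 1:] else 0) - [:0, 1:] * coeff (alpha_poly m) i
     - (case i of 0 \<Rightarrow> 0 | Suc j \<Rightarrow> coeff (alpha_poly m) j + coeff (beta_poly m) j)"
  by (simp add: u_coeff_def coeff_mult_py coeff_mult_pc coeff_py_power split: nat.split)

lemma degree_u_coeff: "degree (u_coeff m) \<le> m"
proof (rule degree_le, intro allI impI)
  fix i assume "m < i"
  then obtain j where "i = Suc j" "m \<le> j" by (cases i) auto
  then show "coeff (u_coeff m) i = 0"
    using alpha_beta_poly_coeff_high[of m i] alpha_beta_poly_coeff_high[of m j]
    by (simp add: coeff_u_coeff)
qed

lemma coeff_u_coeff_top: "coeff (u_coeff m) m = [:- (of_nat (m * (m + 1)) / 2), 1:]"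
proof (cases m)
  case (Suc k)
  have "coeff (alpha_poly m) m = 0" using alpha_beta_poly_coeff_high by auto
  then show ?thesis
    using alpha_beta_poly_coeff_top[of k] by (simp add: coeff_u_coeff Suc field_simps)
qed (simp add: coeff_u_coeff alpha_beta_poly_0)

lemma peval2_u_coeff:
  assumes "additive s" and "s 1 = 1" and "C * T = T * C"
  shows "peval (peval s C) T (u_coeff m)
    = T ^ m * C - fst (alpha_beta T (- C) m) * (T + C) - snd (alpha_beta T (- C) m) * T"
proof -
  let ?g = "peval (peval s C) T"
  have g: "additive ?g" by (intro additive_peval assms(1))
  have "?g (x * - pc) = ?g x * - C" for x
    using peval2_mult_pc[OF assms] additive.minus[OF g] by (metis mult_minus_right)
  then have "?g (alpha_poly m) = fst (alpha_beta T (- C) m)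
      \<and> ?g (beta_poly m) = snd (alpha_beta T (- C) m)"
    unfolding alpha_poly_def beta_poly_def
    by (intro map_alpha_beta[OF g]) (simp_all add: peval2_mult_py peval2_py_power assms)
  then show ?thesis
    by (simp add: u_coeff_def additive.diff[OF g] peval2_mult_py peval2_mult_pc peval2_py_power
        assms distrib_left)
qed

section \<open>The free algebra and U(sl_2)\<close>

datatype word = Word (letters: "nat list")

instantiation word :: monoid_add
begin
definition zero_word :: word where "zero_word = Word []"
definition plus_word :: "word \<Rightarrow> word \<Rightarrow> word" where
  "plus_word u v = Word (letters u @ letters v)"
instance by standard (auto simp: zero_word_def plus_word_def)
end

lemma Word_append [simp]: "Word u + Word v = Word (u @ v)"
  by (simp add: plus_word_def)

type_synonym falg = "word \<Rightarrow>\<^sub>0 complex"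

definition fa_of :: "falg \<Rightarrow> fa" where
  "fa_of p = (\<lambda>w. Poly_Mapping.lookup p (Word w))"

lemma fa_of_0 [simp]: "fa_of 0 = (\<lambda>_. 0)"
  by (simp add: fa_of_def)

lemma fa_mult_0_left [simp]: "fa_mult (\<lambda>_. 0) a = (\<lambda>_. 0)"
  and fa_mult_0_right [simp]: "fa_mult a (\<lambda>_. 0) = (\<lambda>_. 0)"
  by (simp_all add: fa_mult_def)

lemma fa_of_add: "fa_of (p + q) = fa_add (fa_of p) (fa_of q)"
  by (simp add: fa_of_def fa_add_def lookup_add)

lemma fa_of_diff: "fa_of (p - q) = fa_sub (fa_of p) (fa_of q)"
  by (simp add: fa_of_def fa_sub_def lookup_minus)

lemma fa_of_sum: "fa_of (sum f S) = (\<lambda>w. \<Sum>x\<in>S. fa_of (f x) w)"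
  by (simp add: fa_of_def lookup_sum)

lemma fa_of_scalar_mult: "fa_of (scalar z * p) = fa_scal z (fa_of p)"
  by (simp add: fa_of_def fa_scal_def lookup_scalar_mult)

lemma fa_of_one: "fa_of 1 = fa_one"
  by (auto simp: fa_of_def fa_one_def fa_mono_def lookup_one zero_word_def)

lemma fa_of_scalar: "fa_of (scalar z) = fa_scal z fa_one"
  using fa_of_scalar_mult[of z 1] by (simp add: fa_of_one)

lemma fa_mult_add_left: "fa_mult (fa_add a b) c = fa_add (fa_mult a c) (fa_mult b c)"
  by (simp add: fa_mult_def fa_add_def algebra_simps sum.distrib)

lemma fa_mult_add_right: "fa_mult c (fa_add a b) = fa_add (fa_mult c a) (fa_mult c b)"
  by (simp add: fa_mult_def fa_add_def algebra_simps sum.distrib)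

lemma fa_of_mult_single:
  "fa_of (Poly_Mapping.single (Word u) a * Poly_Mapping.single (Word v) b)
   = fa_mult (fa_of (Poly_Mapping.single (Word u) a)) (fa_of (Poly_Mapping.single (Word v) b))"
  (is "?l = ?r")
proof
  fix w
  have "?r w = (\<Sum>k\<le>length w. if k = length u \<and> w = u @ v then a * b else 0)"
    unfolding fa_mult_def fa_of_def
    by (rule sum.cong) (auto simp: lookup_single when_def min_def)
  also have "\<dots> = (if w = u @ v then a * b else 0)"
    by (simp add: sum.delta' conj_commute)
  finally show "?l w = ?r w"
    by (auto simp: fa_of_def mult_single lookup_single when_def)
qed

lemma fa_of_mult: "fa_of (p * q) = fa_mult (fa_of p) (fa_of q)"
proof (induction p rule: poly_mapping_single_induct)
  case (single k a)
  show ?case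
  proof (induction q rule: poly_mapping_single_induct)
    case (single k' b)
    then show ?case by (cases k, cases k') (simp only: fa_of_mult_single)
  qed (simp_all add: distrib_left fa_of_add fa_mult_add_right)
qed (simp_all add: distrib_right fa_of_add fa_mult_add_left)

lemma fa_fin_fa_of: "fa_fin (fa_of p)"
proof -
  have "{w. fa_of p w \<noteq> 0} = Word -` Poly_Mapping.keys p"
    by (auto simp: fa_of_def in_keys_iff)
  then show ?thesis
    unfolding fa_fin_def by (metis finite_keys finite_vimageI injI word.inject)
qed

lemma fa_fin_obtains_fa_of:
  assumes "fa_fin a"
  obtains p where "fa_of p = a"
proof
  have "{k. a (letters k) \<noteq> 0} = Word ` {w. a w \<noteq> 0}"
    by (auto simp: image_iff) (metis word.collapse)
  then have "finite {k. a (letters k) \<noteq> 0}"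
    using assms by (simp add: fa_fin_def)
  then show "fa_of (Abs_poly_mapping (\<lambda>k. a (letters k))) = a"
    by (simp add: fa_of_def)
qed

definition letter :: "nat \<Rightarrow> falg" where
  "letter a = Poly_Mapping.single (Word [a]) 1"

lemma single_Word_Cons:
  "Poly_Mapping.single (Word (a # w)) c = letter a * Poly_Mapping.single (Word w) c"
  by (simp add: letter_def mult_single)

lemma fa_of_letter: "fa_of (letter a) = fa_gen a"
  by (auto simp: fa_of_def letter_def fa_gen_def fa_mono_def lookup_single when_def)

definition sl2_rel_pm :: "nat \<Rightarrow> nat \<Rightarrow> nat \<Rightarrow> falg" where
  "sl2_rel_pm p q r = letter p * letter q - letter q * letter p - scalar \<i> * letter r"

lemma fa_of_sl2_rel_pm: "fa_of (sl2_rel_pm p q r) = sl2_rel p q r"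
  unfolding sl2_rel_pm_def sl2_rel_def fa_of_diff fa_of_scalar_mult
  by (simp add: fa_of_mult fa_of_letter)

lemma sl2_ideal_mult_fa_of:
  assumes "x \<in> sl2_ideal"
  shows "fa_mult (fa_mult (fa_of u) x) (fa_of v) \<in> sl2_ideal"
  using assms
proof (induction arbitrary: u v)
  case zero
  then show ?case using sl2_ideal.zero by simp
next
  case (gen a b p q r)
  obtain A B where A: "fa_of A = a" and B: "fa_of B = b"
    using fa_fin_obtains_fa_of gen(1,2) by metis
  have "fa_mult (fa_mult (fa_of u) (fa_mult (fa_mult a (sl2_rel p q r)) b)) (fa_of v)
      = fa_of (u * (A * sl2_rel_pm p q r * B) * v)"
    by (simp only: fa_of_mult A B fa_of_sl2_rel_pm)
  also have "\<dots> = fa_of ((u * A) * sl2_rel_pm p q r * (B * v))"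
    by (simp add: mult.assoc)
  also have "\<dots> = fa_mult (fa_mult (fa_of (u * A)) (sl2_rel p q r)) (fa_of (B * v))"
    by (simp only: fa_of_mult fa_of_sl2_rel_pm)
  finally show ?case
    using sl2_ideal.gen[OF fa_fin_fa_of fa_fin_fa_of gen(3)] by simp
next
  case (add x y)
  then show ?case by (simp add: fa_mult_add_left fa_mult_add_right sl2_ideal.add)
qed

text \<open>Only words in the letters 1, 2, 3 are passed to U(sl_2): the Casimir is central modulo
  the relations only on such words.\<close>

definition sl2_word :: "word \<Rightarrow> bool" where
  "sl2_word k \<longleftrightarrow> set (letters k) \<subseteq> {1, 2, 3}"

definition sl2_part :: "falg \<Rightarrow> falg" where
  "sl2_part p = Abs_poly_mapping (\<lambda>k. if sl2_word k then Poly_Mapping.lookup p k else 0)"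

lemma lookup_sl2_part:
  "Poly_Mapping.lookup (sl2_part p) k = (if sl2_word k then Poly_Mapping.lookup p k else 0)"
proof -
  have "finite {k. (if sl2_word k then Poly_Mapping.lookup p k else 0) \<noteq> 0}"
    by (rule finite_subset[OF _ finite_keys[of p]]) (auto simp: in_keys_iff)
  then show ?thesis by (simp add: sl2_part_def)
qed

interpretation sl2_part: additive sl2_part
  by unfold_locales (rule poly_mapping_eqI, simp add: lookup_sl2_part lookup_add)

lemma sl2_part_single:
  "sl2_part (Poly_Mapping.single k a) = (if sl2_word k then Poly_Mapping.single k a else 0)"
  by (rule poly_mapping_eqI) (auto simp: lookup_sl2_part lookup_single when_def)

lemma sl2_word_plus [simp]: "sl2_word (u + v) \<longleftrightarrow> sl2_word u \<and> sl2_word v"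
  by (cases u; cases v) (auto simp: sl2_word_def)

lemma sl2_part_mult: "sl2_part (p * q) = sl2_part p * sl2_part q"
proof (induction p rule: poly_mapping_single_induct)
  case (single k a)
  show ?case
  proof (induction q rule: poly_mapping_single_induct)
    case (single k' b)
    show ?case by (simp add: sl2_part_single mult_single)
  qed (simp_all add: distrib_left sl2_part.add sl2_part.zero)
qed (simp_all add: distrib_right sl2_part.add sl2_part.zero)

lemma sl2_part_idem [simp]: "sl2_part (sl2_part p) = sl2_part p"
  by (rule poly_mapping_eqI) (simp add: lookup_sl2_part)

lemma sl2_part_scalar [simp]: "sl2_part (scalar z) = scalar z"
  by (simp add: scalar_def sl2_part_single sl2_word_def zero_word_def)

lemma sl2_part_1 [simp]: "sl2_part 1 = 1"
  using sl2_part_scalar[of 1] by simp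

lemma sl2_part_power: "sl2_part (p ^ n) = sl2_part p ^ n"
  by (induction n) (simp_all add: sl2_part_mult)

lemma sl2_part_letter [simp]: "a \<in> {1, 2, 3} \<Longrightarrow> sl2_part (letter a) = letter a"
  by (auto simp: letter_def sl2_part_single sl2_word_def)

definition U_ker :: "falg set" where
  "U_ker = {p. fa_of (sl2_part p) \<in> sl2_ideal}"

lemma U_ker_0 [simp]: "0 \<in> U_ker"
  by (simp add: U_ker_def sl2_part.zero sl2_ideal.zero)

lemma U_ker_add: "p \<in> U_ker \<Longrightarrow> q \<in> U_ker \<Longrightarrow> p + q \<in> U_ker"
  by (simp add: U_ker_def sl2_part.add fa_of_add sl2_ideal.add)

lemma U_ker_mult: "p \<in> U_ker \<Longrightarrow> u * p * v \<in> U_ker"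
  using sl2_ideal_mult_fa_of by (simp add: U_ker_def sl2_part_mult fa_of_mult)

lemma U_ker_mult_left: "p \<in> U_ker \<Longrightarrow> u * p \<in> U_ker"
  using U_ker_mult[of p u 1] by simp

lemma U_ker_mult_right: "p \<in> U_ker \<Longrightarrow> p * v \<in> U_ker"
  using U_ker_mult[of p 1 v] by simp

lemma U_ker_uminus: "p \<in> U_ker \<Longrightarrow> - p \<in> U_ker"
  using U_ker_mult_left[of p "- 1"] by simp

lemma U_ker_diff: "p \<in> U_ker \<Longrightarrow> q \<in> U_ker \<Longrightarrow> p - q \<in> U_ker"
  using U_ker_add U_ker_uminus by (metis diff_conv_add_uminus)

lemma U_ker_sl2_rel_pm: "(p, q, r) \<in> sl2_triples \<Longrightarrow> sl2_rel_pm p q r \<in> U_ker"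
proof -
  assume triple: "(p, q, r) \<in> sl2_triples"
  then have "sl2_part (sl2_rel_pm p q r) = sl2_rel_pm p q r"
    by (auto simp: sl2_triples_def sl2_rel_pm_def sl2_part.diff sl2_part_mult)
  moreover have "fa_of (sl2_rel_pm p q r) = fa_mult (fa_mult (fa_of 1) (sl2_rel p q r)) (fa_of 1)"
    by (simp flip: fa_of_mult fa_of_sl2_rel_pm)
  ultimately show ?thesis
    unfolding U_ker_def using sl2_ideal.gen[OF fa_fin_fa_of fa_fin_fa_of triple] by simp
qed

definition casimir_pm :: falg where
  "casimir_pm = letter 1 * letter 1 + letter 2 * letter 2 + letter 3 * letter 3"

lemma fa_of_casimir_pm: "fa_of casimir_pm = casimir"
  by (simp add: casimir_pm_def casimir_def fa_of_add fa_of_mult fa_of_letter)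

lemma sl2_part_casimir_pm [simp]: "sl2_part casimir_pm = casimir_pm"
  by (simp add: casimir_pm_def sl2_part.add sl2_part_mult)

lemma casimir_pm_commutator:
  assumes "(p, q, r) \<in> sl2_triples"
  shows "casimir_pm * letter p - letter p * casimir_pm
    = letter r * sl2_rel_pm r p q + sl2_rel_pm r p q * letter r
      - letter q * sl2_rel_pm p q r - sl2_rel_pm p q r * letter q"
  using assms
  by (auto simp: sl2_triples_def casimir_pm_def sl2_rel_pm_def algebra_simps mult_scalar_left_commute)

lemma casimir_pm_commute_letter:
  assumes "a \<in> {1, 2, 3}"
  shows "casimir_pm * letter a - letter a * casimir_pm \<in> U_ker"
proof -
  from assms obtain q r where t1: "(a, q, r) \<in> sl2_triples" and t2: "(r, a, q) \<in> sl2_triples"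
    by (auto simp: sl2_triples_def)
  show ?thesis
    unfolding casimir_pm_commutator[OF t1] using U_ker_sl2_rel_pm[OF t1] U_ker_sl2_rel_pm[OF t2]
    by (intro U_ker_add U_ker_diff; simp add: U_ker_mult_left U_ker_mult_right)
qed

lemma casimir_pm_commute_word:
  assumes "set w \<subseteq> {1, 2, 3}"
  shows "casimir_pm * Poly_Mapping.single (Word w) a - Poly_Mapping.single (Word w) a * casimir_pm
    \<in> U_ker"
  using assms
proof (induction w)
  case Nil
  then show ?case
    by (simp add: scalar_commute flip: scalar_def zero_word_def)
next
  case (Cons x w)
  let ?s = "Poly_Mapping.single (Word w) a"
  have "casimir_pm * (letter x * ?s) - (letter x * ?s) * casimir_pm
     = (casimir_pm * letter x - letter x * casimir_pm) * ?s
       + letter x * (casimir_pm * ?s - ?s * casimir_pm)"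
    by (simp add: algebra_simps)
  also have "\<dots> \<in> U_ker"
    using Cons casimir_pm_commute_letter[of x]
    by (intro U_ker_add U_ker_mult_left U_ker_mult_right) auto
  finally show ?case by (simp add: single_Word_Cons)
qed

lemma casimir_pm_commute: "casimir_pm * p - p * casimir_pm \<in> U_ker"
proof -
  have "casimir_pm * sl2_part p - sl2_part p * casimir_pm \<in> U_ker"
  proof (induction p rule: poly_mapping_single_induct)
    case (single k a)
    show ?case
    proof (cases "sl2_word k")
      case True
      then obtain w where "k = Word w" "set w \<subseteq> {1, 2, 3}"
        by (cases k) (auto simp: sl2_word_def)
      then show ?thesis using casimir_pm_commute_word by (simp add: sl2_part_single)
    qed (simp add: sl2_part_single)
  next
    case (add f g)
    then show ?case
      using U_ker_add[OF add.IH] by (simp add: sl2_part.add algebra_simps)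
  qed (simp add: sl2_part.zero)
  then show ?thesis
    by (simp add: U_ker_def sl2_part.diff sl2_part_mult)
qed

definition eval_casimir :: "complex poly \<Rightarrow> falg" where
  "eval_casimir q = peval scalar casimir_pm q"

lemma fa_of_eval_casimir: "fa_of (eval_casimir q) = eval_c q"
proof -
  have "fa_of (casimir_pm ^ k) = fa_pow casimir k" for k
    by (induction k) (simp_all add: fa_of_one fa_of_mult fa_of_casimir_pm)
  then show ?thesis
    by (simp add: eval_casimir_def peval_def eval_c_def fa_of_sum fa_of_scalar_mult fa_scal_def)
qed

lemma sl2_part_eval_casimir: "sl2_part (eval_casimir q) = eval_casimir q"
  by (simp add: eval_casimir_def peval_def sl2_part.sum sl2_part_mult sl2_part_power)

lemma eval_casimir_u_poly_diag:
  "eval_casimir (u_poly m m) = casimir_pm - scalar (of_nat (m * (m + 1)) / 2)"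
proof -
  have scalar_additive: "additive (scalar :: complex \<Rightarrow> falg)"
    by unfold_locales (rule scalar_add)
  have "u_poly m m = [:- (of_nat (m * (m + 1)) / 2), 1:]"
    by (simp add: u_poly_eq_coeff coeff_u_coeff_top)
  then show ?thesis
    by (simp add: eval_casimir_def peval_bound[OF scalar_additive, of _ "Suc 0"] scalar_minus)
qed

section \<open>Contracting the tensor square\<close>

definition wrap :: "falg \<Rightarrow> falg" where
  "wrap p = letter 1 * p * letter 1 + letter 2 * p * letter 2 + letter 3 * p * letter 3"

definition wraps :: "nat \<Rightarrow> falg \<Rightarrow> falg" where
  "wraps n = wrap ^^ n"

interpretation wrap: additive wrap
  by unfold_locales (simp add: wrap_def algebra_simps)

interpretation wraps: additive "wraps n" for n
  by unfold_locales (induction n, simp_all add: wraps_def wrap.add)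

declare wraps.zero [simp]

lemma wraps_0 [simp]: "wraps 0 p = p"
  by (simp add: wraps_def)

lemma wraps_Suc: "wraps (Suc n) p = wrap (wraps n p)"
  and wraps_Suc': "wraps (Suc n) p = wraps n (wrap p)"
  by (simp_all add: wraps_def funpow_swap1)

lemma wraps_scalar_mult: "wraps n (scalar z * p) = scalar z * wraps n p"
proof -
  have "wrap (scalar z * p) = scalar z * wrap p" for p
    by (simp add: wrap_def algebra_simps mult_scalar_left_commute)
  then show ?thesis by (induction n) (simp_all add: wraps_Suc)
qed

lemma wrap_U_ker: "p \<in> U_ker \<Longrightarrow> wrap p \<in> U_ker"
  unfolding wrap_def by (intro U_ker_add U_ker_mult)

lemma wraps_U_ker: "p \<in> U_ker \<Longrightarrow> wraps n p \<in> U_ker"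
  by (induction n) (simp_all add: wraps_Suc wrap_U_ker)

lemma wrap_casimir_pm: "wrap (casimir_pm * p) - casimir_pm * wrap p \<in> U_ker"
proof -
  have "wrap (casimir_pm * p) - casimir_pm * wrap p
      = (letter 1 * casimir_pm - casimir_pm * letter 1) * p * letter 1
      + (letter 2 * casimir_pm - casimir_pm * letter 2) * p * letter 2
      + (letter 3 * casimir_pm - casimir_pm * letter 3) * p * letter 3"
    by (simp add: wrap_def algebra_simps)
  moreover have "letter a * casimir_pm - casimir_pm * letter a \<in> U_ker" for a
    using U_ker_uminus[OF casimir_pm_commute[of "letter a"]] by simp
  ultimately show ?thesis
    by (simp add: U_ker_add U_ker_mult_right)
qed

lemma wraps_casimir_pm: "wraps n (casimir_pm * p) - casimir_pm * wraps n p \<in> U_ker"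
proof (induction n)
  case (Suc n)
  have "wraps (Suc n) (casimir_pm * p) - casimir_pm * wraps (Suc n) p
      = wrap (wraps n (casimir_pm * p) - casimir_pm * wraps n p)
      + (wrap (casimir_pm * wraps n p) - casimir_pm * wrap (wraps n p))"
    by (simp add: wraps_Suc wrap.diff)
  then show ?case
    using Suc by (simp only:) (intro U_ker_add wrap_U_ker wrap_casimir_pm)
qed simp

type_synonym falg2 = "word \<times> word \<Rightarrow>\<^sub>0 complex"

definition contract :: "nat \<Rightarrow> falg2 \<Rightarrow> falg" where
  "contract n Z = (\<Sum>k\<in>Poly_Mapping.keys Z. scalar (Poly_Mapping.lookup Z k)
      * (Poly_Mapping.single (fst k) 1 * wraps n (Poly_Mapping.single (snd k) 1)))"

lemma contract_superset:
  assumes "finite S" and "Poly_Mapping.keys Z \<subseteq> S"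
  shows "contract n Z = (\<Sum>k\<in>S. scalar (Poly_Mapping.lookup Z k)
      * (Poly_Mapping.single (fst k) 1 * wraps n (Poly_Mapping.single (snd k) 1)))"
  unfolding contract_def by (rule sum.mono_neutral_left[OF assms]) (auto simp: in_keys_iff)

interpretation contract: additive "contract n" for n
proof
  fix Z Z' :: falg2
  let ?S = "Poly_Mapping.keys Z \<union> Poly_Mapping.keys Z'"
  show "contract n (Z + Z') = contract n Z + contract n Z'"
    by (simp add: contract_superset[of ?S] keys_add lookup_add scalar_add distrib_right sum.distrib)
qed

declare contract.zero [simp]

lemma contract_single:
  "contract n (Poly_Mapping.single (u, v) a)
     = scalar a * (Poly_Mapping.single u 1 * wraps n (Poly_Mapping.single v 1))"
  by (cases "a = 0") (simp_all add: contract_def)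

lemma contract_scalar_mult: "contract n (scalar z * Z) = scalar z * contract n Z"
proof (induction Z rule: poly_mapping_single_induct)
  case (single k a)
  show ?case
    by (cases k) (simp add: scalar_mult_single contract_single scalar_mult mult.assoc)
qed (simp_all add: distrib_left contract.add)

lemma contract_tensor_fst_mult: "contract n (tensor_fst p * Z) = p * contract n Z"
proof (induction Z rule: poly_mapping_single_induct)
  case (single k a)
  obtain u v where k: "k = (u, v)" by (cases k)
  show ?case unfolding k
  proof (induction p rule: poly_mapping_single_induct)
    case (single w b)
    have single_plus:
      "Poly_Mapping.single (w + u) 1 = Poly_Mapping.single w 1 * Poly_Mapping.single u (1 :: complex)"
      by (simp add: mult_single)
    have "contract n (tensor_fst (Poly_Mapping.single w b) * Poly_Mapping.single (u, v) a)
        = scalar (b * a) * (Poly_Mapping.single (w + u) 1 * wraps n (Poly_Mapping.single v 1))"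
      by (simp add: tensor_fst_single mult_single contract_single)
    also have "\<dots> = (scalar b * Poly_Mapping.single w 1)
        * (scalar a * (Poly_Mapping.single u 1 * wraps n (Poly_Mapping.single v 1)))"
      by (simp only: single_plus scalar_mult mult.assoc mult_scalar_left_commute[of "Poly_Mapping.single w 1"])
    also have "\<dots> = Poly_Mapping.single w b * contract n (Poly_Mapping.single (u, v) a)"
      by (simp only: contract_single flip: single_eq_scalar_mult)
    finally show ?case .
  qed (simp_all add: tensor_fst.add distrib_right contract.add)
qed (simp_all add: distrib_left contract.add)

lemma contract_tensor_snd: "contract n (tensor_snd q) = wraps n q"
proof (induction q rule: poly_mapping_single_induct)
  case (single k a)
  show ?case
    by (simp add: tensor_snd_single contract_single flip: wraps_scalar_mult single_eq_scalar_mult)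
qed (simp_all add: tensor_snd.add contract.add wraps.add)

lemma contract_tensor: "contract n (tensor_fst p * tensor_snd q) = p * wraps n q"
  by (simp add: contract_tensor_fst_mult contract_tensor_snd)

definition wrap_snd :: "falg2 \<Rightarrow> falg2" where
  "wrap_snd Z = tensor_snd (letter 1) * Z * tensor_snd (letter 1)
     + tensor_snd (letter 2) * Z * tensor_snd (letter 2) + tensor_snd (letter 3) * Z * tensor_snd (letter 3)"

interpretation wrap_snd: additive wrap_snd
  by unfold_locales (simp add: wrap_snd_def algebra_simps)

lemma contract_wrap_snd: "contract n (wrap_snd Z) = contract (Suc n) Z"
proof (induction Z rule: poly_mapping_single_induct)
  case (single k a)
  obtain u v where k: "k = (u, v)" by (cases k)
  have "tensor_snd (letter b) * Poly_Mapping.single (u, v) a * tensor_snd (letter b)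
      = tensor_fst (Poly_Mapping.single u a) * tensor_snd (letter b * Poly_Mapping.single v 1 * letter b)"
    for b
  proof -
    have "tensor_snd (letter b) * Poly_Mapping.single (u, v) a * tensor_snd (letter b)
        = (tensor_fst 1 * tensor_snd (letter b))
          * (tensor_fst (Poly_Mapping.single u a) * tensor_snd (Poly_Mapping.single v 1))
          * (tensor_fst 1 * tensor_snd (letter b))"
      by (simp only: single_pair_eq_tensor tensor_fst_1 mult_1)
    also have "\<dots>
        = tensor_fst (Poly_Mapping.single u a) * tensor_snd (letter b * Poly_Mapping.single v 1 * letter b)"
      by (simp only: tensor_mult_tensor mult_1 mult_1_right)
    finally show ?thesis .
  qed
  then have "wrap_snd (Poly_Mapping.single k a)
      = tensor_fst (Poly_Mapping.single u a) * tensor_snd (wrap (Poly_Mapping.single v 1))"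
    by (simp add: k wrap_snd_def wrap_def tensor_snd.add distrib_left)
  then show ?case
    by (simp add: k contract_tensor contract_single wraps_Suc' single_eq_scalar_mult[of u a] mult.assoc)
qed (simp_all add: wrap_snd.add contract.add wrap_snd.zero)

definition contract_ker :: "falg2 set" where
  "contract_ker = {Z. \<forall>P Q n. contract n (P * Z * Q) \<in> U_ker}"

lemma contract_ker_0 [simp]: "0 \<in> contract_ker"
  by (simp add: contract_ker_def)

lemma contract_ker_add: "Z \<in> contract_ker \<Longrightarrow> Z' \<in> contract_ker \<Longrightarrow> Z + Z' \<in> contract_ker"
  by (simp add: contract_ker_def distrib_left distrib_right contract.add U_ker_add)

lemma contract_ker_uminus: "Z \<in> contract_ker \<Longrightarrow> - Z \<in> contract_ker"
  by (simp add: contract_ker_def contract.minus U_ker_uminus)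

lemma contract_ker_diff: "Z \<in> contract_ker \<Longrightarrow> Z' \<in> contract_ker \<Longrightarrow> Z - Z' \<in> contract_ker"
  by (metis contract_ker_add contract_ker_uminus diff_conv_add_uminus)

lemma contract_ker_mult: "Z \<in> contract_ker \<Longrightarrow> X * Z * Y \<in> contract_ker"
  unfolding contract_ker_def by (simp add: mult.assoc) (metis mult.assoc)

lemma contract_in_U_ker: "Z \<in> contract_ker \<Longrightarrow> contract n Z \<in> U_ker"
  unfolding contract_ker_def by (metis (no_types, lifting) CollectD mult_1 mult_1_right)

lemma contract_kerI:
  assumes "\<And>u1 v1 a u2 v2 b n.
    contract n (Poly_Mapping.single (u1, v1) a * Z * Poly_Mapping.single (u2, v2) b) \<in> U_ker"
  shows "Z \<in> contract_ker"
  unfolding contract_ker_def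
proof (intro CollectI allI)
  fix P Q n
  show "contract n (P * Z * Q) \<in> U_ker"
  proof (induction P rule: poly_mapping_single_induct)
    case (single k a)
    show ?case
    proof (induction Q rule: poly_mapping_single_induct)
      case (single k' b)
      show ?case using assms by (cases k, cases k') simp
    qed (simp_all add: distrib_left contract.add U_ker_add)
  qed (simp_all add: distrib_right contract.add U_ker_add)
qed

lemma single_mult_tensor_mult_single:
  fixes p q :: falg
  shows "Poly_Mapping.single (u1, v1) a * (tensor_fst p * tensor_snd q) * Poly_Mapping.single (u2, v2) b
   = tensor_fst (Poly_Mapping.single u1 a * p * Poly_Mapping.single u2 b)
     * tensor_snd (Poly_Mapping.single v1 1 * q * Poly_Mapping.single v2 1)"
  by (simp only: single_pair_eq_tensor[of u1] single_pair_eq_tensor[of u2] tensor_mult_tensor)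

lemma tensor_fst_in_contract_ker: "r \<in> U_ker \<Longrightarrow> tensor_fst r \<in> contract_ker"
  by (rule contract_kerI)
    (metis single_mult_tensor_mult_single contract_tensor U_ker_mult U_ker_mult_right tensor_snd_1
      mult_1_right)

lemma tensor_snd_in_contract_ker: "r \<in> U_ker \<Longrightarrow> tensor_snd r \<in> contract_ker"
  by (rule contract_kerI)
    (metis single_mult_tensor_mult_single contract_tensor U_ker_mult U_ker_mult_left wraps_U_ker
      tensor_fst_1 mult_1)

lemma casimir_pm_swap:
  "(s1 * casimir_pm * s2) * wraps n (t1 * t2) - (s1 * s2) * wraps n (t1 * casimir_pm * t2) \<in> U_ker"
proof -
  have "(s1 * casimir_pm * s2) * wraps n (t1 * t2) - (s1 * s2) * wraps n (t1 * casimir_pm * t2)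
     = s1 * (casimir_pm * s2 - s2 * casimir_pm) * wraps n (t1 * t2)
     - (s1 * s2) * (wraps n (casimir_pm * (t1 * t2)) - casimir_pm * wraps n (t1 * t2))
     + (s1 * s2) * wraps n ((casimir_pm * t1 - t1 * casimir_pm) * t2)"
    by (simp add: algebra_simps wraps.diff)
  also have "\<dots> \<in> U_ker"
    by (intro U_ker_add U_ker_diff U_ker_mult U_ker_mult_left wraps_U_ker U_ker_mult_right
        casimir_pm_commute wraps_casimir_pm)
  finally show ?thesis .
qed

lemma tensor_casimir_pm_in_contract_ker: "tensor_fst casimir_pm - tensor_snd casimir_pm \<in> contract_ker"
proof (rule contract_kerI)
  fix u1 v1 a u2 v2 b n
  have "contract n (Poly_Mapping.single (u1, v1) a * (tensor_fst casimir_pm - tensor_snd casimir_pm)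
      * Poly_Mapping.single (u2, v2) b)
    = (Poly_Mapping.single u1 a * casimir_pm * Poly_Mapping.single u2 b)
        * wraps n (Poly_Mapping.single v1 1 * Poly_Mapping.single v2 1)
      - (Poly_Mapping.single u1 a * Poly_Mapping.single u2 b)
        * wraps n (Poly_Mapping.single v1 1 * casimir_pm * Poly_Mapping.single v2 1)"
    (is "?l = _")
    using single_mult_tensor_mult_single[of u1 v1 a casimir_pm 1 u2 v2 b]
      single_mult_tensor_mult_single[of u1 v1 a 1 casimir_pm u2 v2 b]
    by (simp add: left_diff_distrib right_diff_distrib contract.diff contract_tensor)
  then show "?l \<in> U_ker"
    using casimir_pm_swap by simp
qed

lemma sl2_ideal_empty_word: "x \<in> sl2_ideal \<Longrightarrow> x [] = 0"
proof (induction rule: sl2_ideal.induct)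
  case (gen a b p q r)
  then show ?case
    by (simp add: fa_mult_def sl2_rel_def fa_sub_def fa_scal_def fa_gen_def fa_mono_def)
qed (simp_all add: fa_add_def)

lemma one_notin_contract_ker: "1 \<notin> contract_ker"
proof
  assume "1 \<in> contract_ker"
  moreover have "contract 0 1 = 1"
    using contract_tensor[of 0 1 1] by simp
  ultimately have "fa_one \<in> sl2_ideal"
    using contract_in_U_ker[of 1 0] by (simp add: U_ker_def fa_of_one)
  then show False
    using sl2_ideal_empty_word[of fa_one] by (simp add: fa_one_def fa_mono_def)
qed

definition contract_equiv :: "falg2 \<Rightarrow> falg2 \<Rightarrow> bool" where
  "contract_equiv Z Z' \<longleftrightarrow> Z - Z' \<in> contract_ker"

lemma equivp_contract_equiv: "equivp contract_equiv"
proof (rule equivpI)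
  show "reflp contract_equiv" by (simp add: reflp_def contract_equiv_def)
  show "symp contract_equiv"
    unfolding symp_def contract_equiv_def using contract_ker_uminus by fastforce
  show "transp contract_equiv"
    unfolding transp_def contract_equiv_def using contract_ker_add by fastforce
qed

quotient_type pair_alg = falg2 / contract_equiv
  by (rule equivp_contract_equiv)

instantiation pair_alg :: ring_1
begin

lift_definition zero_pair_alg :: pair_alg is 0 .
lift_definition one_pair_alg :: pair_alg is 1 .

lift_definition plus_pair_alg :: "pair_alg \<Rightarrow> pair_alg \<Rightarrow> pair_alg" is "(+)"
  unfolding contract_equiv_def by (drule (1) contract_ker_add) (simp add: algebra_simps)

lift_definition uminus_pair_alg :: "pair_alg \<Rightarrow> pair_alg" is uminus
  unfolding contract_equiv_def by (drule contract_ker_uminus) (simp add: algebra_simps)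

lift_definition minus_pair_alg :: "pair_alg \<Rightarrow> pair_alg \<Rightarrow> pair_alg" is "(-)"
  unfolding contract_equiv_def by (drule (1) contract_ker_diff) (simp add: algebra_simps)

lift_definition times_pair_alg :: "pair_alg \<Rightarrow> pair_alg \<Rightarrow> pair_alg" is "(*)"
proof -
  fix x x' y y' :: falg2
  assume "contract_equiv x x'" and "contract_equiv y y'"
  then have "(x - x') * y + x' * (y - y') \<in> contract_ker"
    unfolding contract_equiv_def
    using contract_ker_mult[of _ 1] contract_ker_mult[of _ _ 1] by (simp add: contract_ker_add)
  then show "contract_equiv (x * y) (x' * y')"
    unfolding contract_equiv_def by (simp add: algebra_simps)
qed

instance
proof
  fix a b c :: pair_alg
  show "a + b + c = a + (b + c)" by transfer (simp add: contract_equiv_def)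
  show "a + b = b + a" by transfer (simp add: contract_equiv_def)
  show "0 + a = a" by transfer (simp add: contract_equiv_def)
  show "- a + a = 0" by transfer (simp add: contract_equiv_def)
  show "a - b = a + - b" by transfer (simp add: contract_equiv_def)
  show "a * b * c = a * (b * c)" by transfer (simp add: contract_equiv_def mult.assoc)
  show "1 * a = a" by transfer (simp add: contract_equiv_def)
  show "a * 1 = a" by transfer (simp add: contract_equiv_def)
  show "(a + b) * c = a * c + b * c" by transfer (simp add: contract_equiv_def distrib_right)
  show "a * (b + c) = a * b + a * c" by transfer (simp add: contract_equiv_def distrib_left)
  show "(0 :: pair_alg) \<noteq> 1"
    by transfer
      (metis contract_equiv_def contract_ker_uminus diff_0 minus_minus one_notin_contract_ker)
qed

end

interpretation abs_pair_alg: additive abs_pair_alg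
  by unfold_locales (simp add: plus_pair_alg.abs_eq)

lemma abs_pair_alg_mult: "abs_pair_alg (x * y) = abs_pair_alg x * abs_pair_alg y"
  by (simp add: times_pair_alg.abs_eq)

lemma abs_pair_alg_1: "abs_pair_alg 1 = 1"
  by (simp add: one_pair_alg_def)

lemma abs_pair_alg_power: "abs_pair_alg (x ^ n) = abs_pair_alg x ^ n"
  by (induction n) (simp_all add: abs_pair_alg_1 abs_pair_alg_mult)

lemma abs_pair_alg_eq_iff: "abs_pair_alg x = abs_pair_alg y \<longleftrightarrow> x - y \<in> contract_ker"
  by (simp add: pair_alg.abs_eq_iff contract_equiv_def)

lemma abs_pair_alg_scalar_commute: "abs_pair_alg (scalar z) * x = x * abs_pair_alg (scalar z)"
  by transfer (simp add: contract_equiv_def scalar_commute)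

definition su2_basis :: "nat \<Rightarrow> falg" where
  "su2_basis a = Poly_Mapping.single (Word [a]) (- \<i>)"

lemma su2_basis_bracket:
  "su2_basis p * su2_basis q - su2_basis q * su2_basis p - su2_basis r = - sl2_rel_pm p q r"
  by (simp add: su2_basis_def sl2_rel_pm_def letter_def mult_single scalar_mult_single single_uminus
      single_diff)

lemma su2_basis_square_sum:
  "su2_basis 1 * su2_basis 1 + su2_basis 2 * su2_basis 2 + su2_basis 3 * su2_basis 3 = - casimir_pm"
  by (simp add: su2_basis_def casimir_pm_def letter_def mult_single single_uminus)

lemma letter_eq_scalar_su2_basis: "letter a = scalar \<i> * su2_basis a"
  by (simp add: su2_basis_def letter_def scalar_mult_single)

definition left_gen :: "nat \<Rightarrow> pair_alg" where
  "left_gen a = abs_pair_alg (tensor_fst (su2_basis a))"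

definition right_gen :: "nat \<Rightarrow> pair_alg" where
  "right_gen a = abs_pair_alg (tensor_snd (su2_basis a))"

interpretation pair_alg: su2_pair left_gen right_gen
proof
  fix p q r
  assume triple: "(p, q, r) \<in> sl2_triples"
  have "tensor_fst (- sl2_rel_pm p q r) \<in> contract_ker" "tensor_snd (- sl2_rel_pm p q r) \<in> contract_ker"
    using triple
    by (simp_all add: tensor_fst_in_contract_ker tensor_snd_in_contract_ker U_ker_uminus U_ker_sl2_rel_pm)
  then show "left_gen p * left_gen q - left_gen q * left_gen p = left_gen r"
    and "right_gen p * right_gen q - right_gen q * right_gen p = right_gen r"
    unfolding left_gen_def right_gen_def
    by (simp_all flip: su2_basis_bracket abs_pair_alg_mult abs_pair_alg.diff tensor_fst_mult tensor_snd_mult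
        tensor_fst.diff tensor_snd.diff add: abs_pair_alg_eq_iff)
next
  show "right_gen b * left_gen a = left_gen a * right_gen b" for a b
    unfolding left_gen_def right_gen_def by (simp flip: abs_pair_alg_mult add: tensor_fst_snd_commute)
  have "tensor_snd casimir_pm - tensor_fst casimir_pm \<in> contract_ker"
    using contract_ker_uminus[OF tensor_casimir_pm_in_contract_ker] by simp
  then show "left_gen 1 * left_gen 1 + left_gen 2 * left_gen 2 + left_gen 3 * left_gen 3
      = right_gen 1 * right_gen 1 + right_gen 2 * right_gen 2 + right_gen 3 * right_gen 3"
    unfolding left_gen_def right_gen_def
    by (simp flip: abs_pair_alg_mult abs_pair_alg.add tensor_fst_mult tensor_snd_mult tensor_fst.add
        tensor_snd.add add: su2_basis_square_sum abs_pair_alg_eq_iff tensor_fst.minus tensor_snd.minus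
        del: One_nat_def)
qed

section \<open>Powers of the split Casimir element\<close>

definition split_casimir :: falg2 where
  "split_casimir = tensor_fst (letter 1) * tensor_snd (letter 1)
     + tensor_fst (letter 2) * tensor_snd (letter 2) + tensor_fst (letter 3) * tensor_snd (letter 3)"

lemma abs_split_casimir: "abs_pair_alg split_casimir = - pair_alg.T"
proof -
  have "tensor_fst (letter a) * tensor_snd (letter a) = - (tensor_fst (su2_basis a) * tensor_snd (su2_basis a))"
    for a
    by (simp add: su2_basis_def letter_def tensor_fst_single tensor_snd_single mult_single single_uminus
        tensor_fst.minus tensor_snd.minus)
  then show ?thesis
    by (simp add: split_casimir_def pair_alg.T_def left_gen_def right_gen_def abs_pair_alg.add
        abs_pair_alg.minus abs_pair_alg.diff abs_pair_alg_mult)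
qed

lemma abs_wrap_snd:
  "abs_pair_alg (wrap_snd Z)
     = - (right_gen 1 * abs_pair_alg Z * right_gen 1 + right_gen 2 * abs_pair_alg Z * right_gen 2
          + right_gen 3 * abs_pair_alg Z * right_gen 3)"
proof -
  let ?i = "abs_pair_alg (scalar \<i>)"
  have i_square: "?i * ?i = - 1"
    by (simp flip: abs_pair_alg_mult scalar_mult add: scalar_minus abs_pair_alg.minus abs_pair_alg_1)
  have "abs_pair_alg (tensor_snd (letter a) * Z * tensor_snd (letter a))
      = (?i * ?i) * (right_gen a * abs_pair_alg Z * right_gen a)" for a
    unfolding letter_eq_scalar_su2_basis tensor_snd_mult tensor_snd_scalar abs_pair_alg_mult right_gen_def
    by (rule central_sandwich[OF abs_pair_alg_scalar_commute])
  then show ?thesis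
    by (simp add: wrap_snd_def abs_pair_alg.add i_square)
qed

lemma abs_wrap_snd_split_casimir_power:
  "abs_pair_alg (wrap_snd (split_casimir ^ m))
     = - ((- 1) ^ m * (pair_alg.T ^ m * pair_alg.K + pair_alg.alpha m * (pair_alg.T - pair_alg.K)
          + pair_alg.beta m * pair_alg.T))"
proof -
  have "abs_pair_alg (split_casimir ^ m) = (- 1) ^ m * pair_alg.T ^ m"
    by (simp add: abs_pair_alg_power abs_split_casimir power_minus[of pair_alg.T])
  moreover have "right_gen a * ((- 1) ^ m * X) * right_gen a = (- 1) ^ m * (right_gen a * X * right_gen a)"
    for a X
    by (cases "even m") simp_all
  ultimately show ?thesis
    by (simp add: abs_wrap_snd distrib_left flip: pair_alg.sum_Y_T_power_Y)
qed

lemma abs_tensor_fst_casimir_pm: "abs_pair_alg (tensor_fst casimir_pm) = - pair_alg.K"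
proof -
  have "pair_alg.K = abs_pair_alg (tensor_fst (- casimir_pm))"
    by (simp add: pair_alg.K_def left_gen_def
        flip: su2_basis_square_sum abs_pair_alg_mult tensor_fst_mult abs_pair_alg.add tensor_fst.add
        del: One_nat_def)
  then show ?thesis by (simp add: tensor_fst.minus abs_pair_alg.minus)
qed

lemma abs_tensor_fst_eval_casimir:
  "abs_pair_alg (tensor_fst (eval_casimir q)) = peval (\<lambda>z. abs_pair_alg (scalar z)) (- pair_alg.K) q"
proof -
  have "additive (abs_pair_alg \<circ> tensor_fst)"
    by unfold_locales (simp add: abs_pair_alg.add tensor_fst.add)
  then show ?thesis
    unfolding eval_casimir_def
    by (subst peval_hom[where h = "abs_pair_alg \<circ> tensor_fst", simplified])
      (simp_all add: abs_pair_alg_mult tensor_fst_mult abs_pair_alg_1 comp_def tensor_fst_scalar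
        abs_tensor_fst_casimir_pm)
qed

lemma wrap_snd_split_casimir_power:
  "wrap_snd (split_casimir ^ m)
     - (\<Sum>i\<le>m. scalar ((- 1) ^ (m - i)) * tensor_fst (eval_casimir (u_poly i m)) * split_casimir ^ i)
   \<in> contract_ker"
proof -
  let ?s = "\<lambda>z. abs_pair_alg (scalar z)" and ?T = pair_alg.T and ?K = pair_alg.K
  let ?E = "\<lambda>i. peval ?s (- ?K) (coeff (u_coeff m) i)"
  have s_additive: "additive ?s"
    by unfold_locales (simp add: scalar_add abs_pair_alg.add)
  have sign: "abs_pair_alg (scalar ((- 1) ^ (m - i))) * (E * ((- 1) ^ i * X)) = (- 1) ^ m * (E * X)"
    if "i \<le> m" for i E X
  proof -
    have "abs_pair_alg (scalar ((- 1) ^ (m - i))) = (- 1) ^ (m - i)"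
      by (simp add: scalar_power scalar_minus abs_pair_alg_power abs_pair_alg.minus abs_pair_alg_1)
    moreover have "(- 1) ^ (m - i) * (- 1) ^ i = ((- 1) ^ m :: pair_alg)"
      using that by (simp flip: power_add)
    ultimately show ?thesis
      by (cases "even i") (simp_all add: mult.assoc, metis mult_minus_left)
  qed
  have "abs_pair_alg (\<Sum>i\<le>m. scalar ((- 1) ^ (m - i)) * tensor_fst (eval_casimir (u_poly i m))
        * split_casimir ^ i)
      = (- 1) ^ m * (\<Sum>i\<le>m. ?E i * ?T ^ i)"
    by (simp add: abs_pair_alg.sum abs_pair_alg_mult abs_pair_alg_power abs_split_casimir
        power_minus[of ?T] abs_tensor_fst_eval_casimir u_poly_eq_coeff sign sum_distrib_left mult.assoc)
  also have "\<dots> = (- 1) ^ m * peval (peval ?s (- ?K)) ?T (u_coeff m)"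
    by (simp add: peval_bound[OF additive_peval[OF s_additive] degree_u_coeff])
  also have "\<dots> = abs_pair_alg (wrap_snd (split_casimir ^ m))"
    by (simp add: peval2_u_coeff[OF s_additive] abs_pair_alg_1 pair_alg.K_commute_T
        abs_wrap_snd_split_casimir_power pair_alg.alpha_def pair_alg.beta_def algebra_simps)
  finally show ?thesis
    by (simp add: abs_pair_alg_eq_iff[symmetric])
qed

section \<open>Colourings of the chords\<close>

definition words :: "nat \<Rightarrow> nat list set" where
  "words k = {xs. set xs \<subseteq> {1, 2, 3} \<and> length xs = k}"

lemma words_0: "words 0 = {[]}"
  by (auto simp: words_def)

lemma sum_words_Suc: "(\<Sum>ys\<in>words (Suc k). f ys) = (\<Sum>a\<in>{1, 2, 3}. \<Sum>xs\<in>words k. f (a # xs))"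
proof -
  have "(\<Sum>ys\<in>words (Suc k). f ys) = (\<Sum>(xs, a)\<in>words k \<times> {1, 2, 3}. f (a # xs))"
    unfolding words_def lists_length_Suc_eq
    by (subst sum.reindex[OF inj_split_Cons]) (simp add: case_prod_unfold)
  also have "\<dots> = (\<Sum>xs\<in>words k. \<Sum>a\<in>{1, 2, 3}. f (a # xs))"
    by (rule sum.cartesian_product[symmetric])
  also have "\<dots> = (\<Sum>a\<in>{1, 2, 3}. \<Sum>xs\<in>words k. f (a # xs))"
    by (rule sum.swap)
  finally show ?thesis .
qed

lemma sum_three: "(\<Sum>a\<in>{1, 2, 3::nat}. f a) = f 1 + f 2 + f 3"
  by (simp add: add.assoc)

lemma split_casimir_power:
  "split_casimir ^ m = (\<Sum>xs\<in>words m. Poly_Mapping.single (Word xs, Word xs) 1)"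
proof (induction m)
  case 0
  then show ?case by (simp add: words_0 flip: zero_word_def zero_prod_def)
next
  case (Suc m)
  have split_casimir: "split_casimir = (\<Sum>a\<in>{1, 2, 3}. Poly_Mapping.single (Word [a], Word [a]) 1)"
    by (simp only: sum_three)
      (simp add: split_casimir_def letter_def tensor_fst_single tensor_snd_single mult_single)
  have "split_casimir ^ Suc m = split_casimir * split_casimir ^ m"
    by simp
  also have "\<dots> = (\<Sum>a\<in>{1, 2, 3}. Poly_Mapping.single (Word [a], Word [a]) 1)
      * (\<Sum>xs\<in>words m. Poly_Mapping.single (Word xs, Word xs) 1)"
    by (subst Suc.IH, subst split_casimir) (rule refl)
  also have "\<dots> = (\<Sum>xs\<in>words (Suc m). Poly_Mapping.single (Word xs, Word xs) 1)"
    by (simp only: sum_words_Suc sum_distrib_left sum_distrib_right mult_single) (simp add: sum.distrib)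
  finally show ?case .
qed

lemma wraps_single:
  "wraps n (Poly_Mapping.single (Word v) 1)
     = (\<Sum>ys\<in>words n. Poly_Mapping.single (Word (ys @ v @ rev ys)) 1)"
proof (induction n)
  case 0
  then show ?case by (simp add: words_0)
next
  case (Suc n)
  have "wrap (Poly_Mapping.single (Word w) 1) = (\<Sum>a\<in>{1, 2, 3}. Poly_Mapping.single (Word (a # w @ [a])) 1)"
    for w
    by (simp only: sum_three) (simp add: wrap_def letter_def mult_single)
  then show ?case
    by (simp add: Suc wraps_Suc wrap.sum sum_words_Suc sum.distrib)
qed

lemma contract_split_casimir_power:
  "contract n (split_casimir ^ m)
     = (\<Sum>xs\<in>words m. \<Sum>ys\<in>words n. Poly_Mapping.single (Word (xs @ ys @ xs @ rev ys)) 1)"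
  by (simp add: split_casimir_power contract.sum contract_single wraps_single sum_distrib_left
      mult_single)

lemma bij_betw_map_upt_PiE:
  "bij_betw (\<lambda>\<phi>. map \<phi> [0..<n]) (PiE {0..<n} (\<lambda>_. A)) {xs. set xs \<subseteq> A \<and> length xs = n}"
proof (rule bij_betw_imageI)
  show "inj_on (\<lambda>\<phi>. map \<phi> [0..<n]) (PiE {0..<n} (\<lambda>_. A))"
    by (rule inj_onI, rule PiE_ext) (auto simp: map_eq_conv)
  show "(\<lambda>\<phi>. map \<phi> [0..<n]) ` PiE {0..<n} (\<lambda>_. A) = {xs. set xs \<subseteq> A \<and> length xs = n}"
  proof (intro equalityI subsetI)
    fix xs assume "xs \<in> {xs. set xs \<subseteq> A \<and> length xs = n}"
    then have "restrict (nth xs) {0..<n} \<in> PiE {0..<n} (\<lambda>_. A)"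
      and "map (restrict (nth xs) {0..<n}) [0..<n] = xs"
      by (auto intro!: nth_equalityI nth_mem)
    then show "xs \<in> (\<lambda>\<phi>. map \<phi> [0..<n]) ` PiE {0..<n} (\<lambda>_. A)"
      by (metis image_eqI)
  qed (auto simp: PiE_iff)
qed

lemma bij_betw_append_words: "bij_betw (\<lambda>(xs, ys). xs @ ys) (words m \<times> words n) (words (m + n))"
proof (rule bij_betw_imageI)
  show "inj_on (\<lambda>(xs, ys). xs @ ys) (words m \<times> words n)"
    by (auto simp: inj_on_def words_def)
  show "(\<lambda>(xs, ys). xs @ ys) ` (words m \<times> words n) = words (m + n)"
  proof (intro equalityI subsetI)
    fix zs assume "zs \<in> words (m + n)"
    then have "(take m zs, drop m zs) \<in> words m \<times> words n"
      by (auto simp: words_def dest: in_set_takeD in_set_dropD)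
    then show "zs \<in> (\<lambda>(xs, ys). xs @ ys) ` (words m \<times> words n)"
      by (metis (no_types, lifting) append_take_drop_id case_prod_conv image_eqI)
  qed (auto simp: words_def)
qed

lemma fa_of_contract_split_casimir_power:
  "fa_of (contract n (split_casimir ^ m)) = w_sl2 (split_diag m n)"
proof
  fix v :: "nat list"
  let ?g = "\<lambda>zs. if take m zs @ drop m zs @ take m zs @ rev (drop m zs) = v then 1 else (0 :: complex)"
  have shift: "map ((+) m) [0..<n] = [m..<m + n]"
    by (induction n) auto
  have set_diag: "set (split_diag m n) = {0..<m + n}"
    by (auto simp: split_diag_def shift)
  have map_diag: "map \<phi> (split_diag m n) = take m (map \<phi> [0..<m + n]) @ drop m (map \<phi> [0..<m + n])
      @ take m (map \<phi> [0..<m + n]) @ rev (drop m (map \<phi> [0..<m + n]))" for \<phi>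
    by (simp add: split_diag_def shift take_map drop_map rev_map)
  have "w_sl2 (split_diag m n) v = (\<Sum>\<phi>\<in>PiE {0..<m + n} (\<lambda>_. {1, 2, 3}). ?g (map \<phi> [0..<m + n]))"
    unfolding w_sl2_def set_diag map_diag ..
  also have "\<dots> = (\<Sum>zs\<in>words (m + n). ?g zs)"
    using sum.reindex_bij_betw[OF bij_betw_map_upt_PiE] by (simp add: words_def)
  also have "\<dots> = (\<Sum>(xs, ys)\<in>words m \<times> words n. ?g (xs @ ys))"
    using sum.reindex_bij_betw[OF bij_betw_append_words, of ?g] by (simp add: case_prod_unfold)
  also have "\<dots> = (\<Sum>(xs, ys)\<in>words m \<times> words n. if xs @ ys @ xs @ rev ys = v then 1 else 0)"
    by (rule sum.cong) (auto simp: words_def)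
  also have "\<dots> = fa_of (contract n (split_casimir ^ m)) v"
    by (simp add: contract_split_casimir_power fa_of_def lookup_sum lookup_single when_def
        sum.cartesian_product case_prod_unfold)
  finally show "fa_of (contract n (split_casimir ^ m)) v = w_sl2 (split_diag m n) v" ..
qed

lemma sl2_part_contract_split_casimir_power:
  "sl2_part (contract n (split_casimir ^ m)) = contract n (split_casimir ^ m)"
  by (simp add: contract_split_casimir_power sl2_part.sum sl2_part_single sl2_word_def words_def)

lemma contract_split_casimir_recursion:
  "contract (Suc n) (split_casimir ^ m)
     - (\<Sum>i\<le>m. scalar ((- 1) ^ (m - i)) * (eval_casimir (u_poly i m) * contract n (split_casimir ^ i)))
   \<in> U_ker"
  using contract_in_U_ker[OF wrap_snd_split_casimir_power, of n]
  by (simp add: contract.diff contract.sum contract_wrap_snd contract_scalar_mult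
      contract_tensor_fst_mult mult.assoc)

definition split_defect :: "nat \<Rightarrow> nat \<Rightarrow> falg" where
  "split_defect m n = contract (Suc n) (split_casimir ^ m)
     - (casimir_pm - scalar (of_nat (m * (m + 1)) / 2)) * contract n (split_casimir ^ m)
     - (\<Sum>i<m. scalar ((- 1) ^ (m - i)) * (eval_casimir (u_poly i m) * contract n (split_casimir ^ i)))"

lemma split_defect_in_U_ker: "split_defect m n \<in> U_ker"
  using contract_split_casimir_recursion[of n m]
  by (simp add: split_defect_def eval_casimir_u_poly_diag flip: lessThan_Suc_atMost)
    (simp add: algebra_simps)

lemma sl2_part_split_defect: "sl2_part (split_defect m n) = split_defect m n"
  by (simp add: split_defect_def sl2_part.diff sl2_part.sum sl2_part_mult
      sl2_part_contract_split_casimir_power sl2_part_eval_casimir)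

lemma fa_of_split_defect:
  "fa_of (split_defect m n) = fa_sub (fa_sub (w_sl2 (split_diag m (Suc n)))
      (fa_mult (fa_sub casimir (fa_scal (of_nat (m * (m + 1)) / 2) fa_one)) (w_sl2 (split_diag m n))))
      (\<lambda>w. \<Sum>i<m. ((-1) ^ (m - i)) * fa_mult (eval_c (u_poly i m)) (w_sl2 (split_diag i n)) w)"
  unfolding split_defect_def fa_of_diff fa_of_sum fa_of_scalar_mult
  by (simp add: fa_of_mult fa_of_diff fa_of_contract_split_casimir_power fa_of_eval_casimir
      fa_of_casimir_pm fa_of_scalar fa_scal_def)

theorem lemma15:
  fixes m n :: nat
  shows "U_eq (w_sl2 (split_diag m 0)) (w_sl2 (complete_diag m))
       \<and> U_eq (fa_sub (w_sl2 (split_diag m (Suc n)))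
                      (fa_mult (fa_sub casimir (fa_scal (of_nat (m * (m + 1)) / 2) fa_one))
                               (w_sl2 (split_diag m n))))
              (\<lambda>w. \<Sum>i<m. ((-1) ^ (m - i)) * fa_mult (eval_c (u_poly i m)) (w_sl2 (split_diag i n)) w)"
proof -
  have "split_diag m 0 = complete_diag m"
    by (simp add: split_diag_def complete_diag_def)
  moreover have "fa_sub a a \<in> sl2_ideal" for a
    by (simp add: fa_sub_def sl2_ideal.zero)
  ultimately show ?thesis
    using split_defect_in_U_ker[of m n]
    by (simp add: U_eq_def U_ker_def sl2_part_split_defect fa_of_split_defect)
qed

end
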